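(* Let $(\Phi,\mathtt{Prg},\mathrm{AT})$ be a CLC SPL with $\Phi=(\mathcal F,\phi)$, let $p$ be a valid product, and let $\mathcal D$ be a derivation of $\phi\vdash\mathtt{Prg}\ \textsc{ok}$ in the family-based type system. If a judgment $\theta;\Delta\vdash e:T$ occurs in $\mathcal D$ and $p\models\theta$, then $[\![\Delta]\!]_p\vdash\langle\!\langle e\rangle\!\rangle_p:T$ is derivable in the LC type system relative to the variant program $[\![\mathtt{Prg}]\!]_p$. Moreover, there is such an LC derivation in which every struct name $s$ appearing satisfies $p\models\mathrm{AT}(\mathtt{Prg}(s))$.
   Context: **Lightweight C (LC).** Types: $T ::= \mathtt{int}\mid \mathtt{void}* \mid \mathtt{struct}\ s*$ ($s$ a struct name). Expressions: $e ::= n$ (integer literal) $\mid \mathtt{NULL}\mid x$ (parameter name) $\mid f(e_1,\dots,e_k)$ ($k\ge0$) $\mid e\texttt{->}m \mid e\texttt{->}m=e \mid e\,?\,e:e \mid (e_1,\dots,e_k)$ ($k\ge1$, a parenthesized expression sequence) $\mid \mathsf{uop}\ e\mid e\ \mathsf{bop}\ e\mid \mathtt{MALLOC}(\mathtt{struct}\ s)\mid \mathtt{MFREE}(e)$. A struct definition is $\mathtt{struct}\ s\{T_1\,m_1;\dots;T_k\,m_k;\};$ (distinct member names); a function definition is $T_0\ f(T_1\,x_1,\dots,T_k\,x_k)\{\mathtt{return}\ e;\}$ (distinct parameter names); a program $\mathtt{Prg}=\overline{SD}\ \overline{FD}$ is a sequence of struct definitions followed by a sequence of function definitions, with distinct struct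 names and distinct function names. $\mathtt{Prg}$ is regarded as a finite map: $\mathtt{Prg}(s)$ is the definition of struct $s$, $\mathtt{Prg}(s)(m)=$ "$T\ m$" is the declaration of member $m$ in it, $\mathtt{Prg}(f)$ is the definition of function $f$; $\mathrm{dom}(\overline{SD})$ is the set of defined struct names. $\mathtt{Prg}$ is *sane* if (1) every struct name occurring anywhere in $\mathtt{Prg}$ is defined in $\mathtt{Prg}$, (2) every function name occurring in the function definitions is defined in $\mathtt{Prg}$, (3) $\mathtt{Prg}(\mathtt{main})=\mathtt{int\ main}()\{\mathtt{return}\ e;\}$ for some $e$. Operator types: unary $-:(\mathtt{int})\to\mathtt{int}$; unary $!:(T)\to\mathtt{int}$ for every type $T$; binary $+,-,*,/,\&\&,||,<,<=,>,>=:(\mathtt{int},\mathtt{int})\to\mathtt{int}$; binary $==,!=:(T,T)\to\mathtt{int}$ for every type $T$. Subtyping $\le$ is the reflexive closure of $\mathtt{void}*\le\mathtt{struct}\ s*$ for every struct $s$ defined in the program; $\max_\le\{T_1,T_2\}$ is the greater of two $\le$-comparable types. LC typing (relative to the program under consideration; $\Gamma$ a finite map from parameter names to types): (T-int) $\Gamma\vdash n:\mathtt{int}$. (T-null) $\Gamma\vdash\mathtt{NULL}:\mathtt{void}*$. (T-par) if $x{:}T\in\Gamma$ then $\Gamma\vdash x:T$. (T-app) if $\mathtt{Prg}(f)=T_0\,f(T_1x_1,\dots,T_kx_k)\{\dots\}$, and $\Gamma\vdash e_i:T_i'$, $T_i'\le T_i$ for $i=1..k$ (exactly $k$ arguments),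 then $\Gamma\vdash f(e_1,\dots,e_k):T_0$. (T-member) if $\Gamma\vdash e_0:\mathtt{struct}\ s*$ and $\mathtt{Prg}(s)(m)=T\,m$ then $\Gamma\vdash e_0\texttt{->}m:T$. (T-assign) if additionally $\Gamma\vdash e_1:T_1$, $T_1\le T$, then $\Gamma\vdash e_0\texttt{->}m=e_1:T$. (T-cond) if $\Gamma\vdash e_j:T_j$ ($j=0,1,2$) and $T_3=\max_\le\{T_1,T_2\}$ then $\Gamma\vdash e_0?e_1:e_2:T_3$. (T-seq) if $\Gamma\vdash e_i:T_i$ for $i=1..n$ then $\Gamma\vdash(e_1,\dots,e_n):T_n$. (T-uop) if $\Gamma\vdash e_0:T_0$ and $\mathsf{uop}$ has type $(T_0)\to\mathtt{int}$ then $\Gamma\vdash\mathsf{uop}\,e_0:\mathtt{int}$. (T-bop) if $\Gamma\vdash e_1:T_1$, $\Gamma\vdash e_2:T_2$, $T_3=\max_\le\{T_1,T_2\}$ and $\mathsf{bop}$ has type $(T_3,T_3)\to\mathtt{int}$ then $\Gamma\vdash e_1\,\mathsf{bop}\,e_2:\mathtt{int}$. (T-malloc) if $s\in\mathrm{dom}(\overline{SD})$ then $\Gamma\vdash\mathtt{MALLOC}(\mathtt{struct}\ s):\mathtt{struct}\ s*$. (T-mfree) if $\Gamma\vdash e_0:\mathtt{struct}\ s*$ then $\Gamma\vdash\mathtt{MFREE}(e_0):\mathtt{void}*$. **Colored LC (CLC).** A feature model $\Phi=(\mathcal F,\phi)$: $\mathcal F$ a finite set of features, $\phi$ a propositional formula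 over $\mathcal F$ (connectives $!,\&\&,||$, constants $0,1$). A product is $p\subseteq\mathcal F$; $p\models\psi$ means $\psi$ is true under the assignment giving 1 to features in $p$ and 0 to the others; $p$ is valid if $p\models\phi$. For formulas, $\theta\models\theta'$ means $\theta\Rightarrow\theta'$ is valid; $\psi_1\Rightarrow\psi_2$ abbreviates $!\psi_1||\psi_2$ and $\psi_1\Leftrightarrow\psi_2$ the conjunction of both implications. An SPL is a triple $(\Phi,\mathtt{Prg},\mathrm{AT})$ with $\mathtt{Prg}$ an LC program (the code base) and $\mathrm{AT}$ an annotation table assigning a propositional formula over $\mathcal F$ to each occurrence of an annotable fragment of $\mathtt{Prg}$; annotable fragments are: each struct definition, each member declaration $T\,m$, each function definition, each formal parameter declaration $T\,x$, each argument of a function call, and each element of a parenthesized sequence. Occurrences not explicitly annotated have annotation $1$. Abbreviations: $\mathrm{AT}(s)=\mathrm{AT}(\mathtt{Prg}(s))$, $\mathrm{AT}(f)=\mathrm{AT}(\mathtt{Prg}(f))$; $\mathrm{AT}(\mathtt{int})=\mathrm{AT}(\mathtt{void}* )=1$, $\mathrm{AT}(\mathtt{struct}\ s* )=\mathrm{AT}(\mathtt{Prg}(s))$; $\exists(e_1,\dots,e_n)=\mathrm{AT}(e_1)||\cdots||\mathrm{AT}(e_n)$; $\mathtt{neverLast}(k,(e_1,\dots,e_n))=\,!\mathrm{AT}(e_k)||\mathrm{AT}(e_{k+1})||\cdots||\mathrm{AT}(e_n)$. An annotated type environment $\Delta$ maps parameter names to pairs written $x{:}T$ with $\psi$; $[\![\Delta]\!]_p$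 is the (LC) type environment $\{x{:}T \mid x{:}T\text{ with }\psi\text{ is in }\Delta,\ p\models\psi\}$. Family-based typing: (FT-prg) if $\mathtt{Prg}$ is sane, $\mathrm{AT}(\mathtt{main})=1$, $\mathtt{Prg}=\overline{SD}\,\overline{FD}$, $\phi\,\&\&\,\mathrm{AT}(SD)\vdash SD\ \textsc{ok}$ for each $SD$ in $\overline{SD}$ and $\phi\,\&\&\,\mathrm{AT}(FD)\vdash FD\ \textsc{ok}$ for each $FD$ in $\overline{FD}$, then $\phi\vdash\mathtt{Prg}\ \textsc{ok}$. (FT-struct) if $\theta\models\mathrm{AT}(T_i\,m_i)\Rightarrow\mathrm{AT}(T_i)$ for all $i$, then $\theta\vdash\mathtt{struct}\ s\{T_1m_1;\dots;T_km_k;\}\ \textsc{ok}$. (FT-fun) if $\theta\models\mathrm{AT}(T_0)$, $\theta\models\mathrm{AT}(T_i\,x_i)\Rightarrow\mathrm{AT}(T_i)$ for all $i$, $\theta;\ x_1{:}T_1\text{ with }\mathrm{AT}(T_1x_1),\dots,x_k{:}T_k\text{ with }\mathrm{AT}(T_kx_k)\vdash e:T'$ and $T'\le T_0$, then $\theta\vdash T_0\,f(T_1x_1,\dots,T_kx_k)\{\mathtt{return}\ e;\}\ \textsc{ok}$. (FT-int) $\theta;\Delta\vdash n:\mathtt{int}$. (FT-null) $\theta;\Delta\vdash\mathtt{NULL}:\mathtt{void}*$. (FT-par) if $x{:}T$ with $\psi$ is in $\Delta$ and $\theta\models\psi$ then $\theta;\Delta\vdash x:T$. (FT-app) if $\mathtt{Prg}(f)=T_0\,f(T_1x_1,\dots,T_kx_k)\{\dots\}$,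 $\theta\models\mathrm{AT}(\mathtt{Prg}(f))$, and for $i=1..k$ (exactly $k$ arguments) $\theta;\Delta\vdash e_i:T_i'$, $T_i'\le T_i$ and $\theta\models\mathrm{AT}(e_i)\Leftrightarrow\mathrm{AT}(T_ix_i)$, then $\theta;\Delta\vdash f(e_1,\dots,e_k):T_0$. (FT-member) if $\theta;\Delta\vdash e_0:\mathtt{struct}\ s*$, $\mathtt{Prg}(s)(m)=T\,m$ and $\theta\models\mathrm{AT}(T\,m)$ then $\theta;\Delta\vdash e_0\texttt{->}m:T$. (FT-assign) if additionally $\theta;\Delta\vdash e_1:T_1$ and $T_1\le T$ then $\theta;\Delta\vdash e_0\texttt{->}m=e_1:T$. (FT-cond), (FT-uop), (FT-bop), (FT-mfree): as T-cond, T-uop, T-bop, T-mfree with every judgment $\Gamma\vdash$ replaced by $\theta;\Delta\vdash$. (FT-seq) if $\theta\models\exists(e_1,\dots,e_n)$, $\theta\,\&\&\,\mathrm{AT}(e_i);\Delta\vdash e_i:T_i$ for all $i$, $T=T_n$, and $\theta\models\mathtt{neverLast}(i,(e_1,\dots,e_n))$ for every $i$ with $T_i\ne T$, then $\theta;\Delta\vdash(e_1,\dots,e_n):T$. (FT-malloc) if $s\in\mathrm{dom}(\overline{SD})$ and $\theta\models\mathrm{AT}(\mathtt{Prg}(s))$ then $\theta;\Delta\vdash\mathtt{MALLOC}(\mathtt{struct}\ s):\mathtt{struct}\ s*$. **Variant generation.** For a product $p$ and a sequence of annotable occurrences: $[\![\,]\!]_p$ is empty; $[\![a_1\dots a_n]\!]_p=\langle\!\langle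 a_1\rangle\!\rangle_p\,[\![a_2\dots a_n]\!]_p$ if $p\models\mathrm{AT}(a_1)$, and $=[\![a_2\dots a_n]\!]_p$ otherwise. $\langle\!\langle\mathtt{struct}\ s\{\overline{T\,m};\}\rangle\!\rangle_p=\mathtt{struct}\ s\{[\![\overline{T\,m}]\!]_p\}$; $\langle\!\langle T_0f(\overline{T\,x})\{\mathtt{return}\ e;\}\rangle\!\rangle_p=T_0f([\![\overline{T\,x}]\!]_p)\{\mathtt{return}\ \langle\!\langle e\rangle\!\rangle_p;\}$; $\langle\!\langle T\,m\rangle\!\rangle_p=T\,m$, $\langle\!\langle T\,x\rangle\!\rangle_p=T\,x$; $\langle\!\langle f(\bar e)\rangle\!\rangle_p=f([\![\bar e]\!]_p)$; $\langle\!\langle(\tilde e)\rangle\!\rangle_p=([\![\tilde e]\!]_p)$; on all other expression forms $\langle\!\langle\cdot\rangle\!\rangle_p$ acts homomorphically on immediate subexpressions ($n$, $\mathtt{NULL}$, $x$, $\mathtt{MALLOC}(\mathtt{struct}\ s)$ unchanged). The variant is $[\![\mathtt{Prg}]\!]_p=[\![\overline{SD}]\!]_p\,[\![\overline{FD}]\!]_p$ for $\mathtt{Prg}=\overline{SD}\,\overline{FD}$. *)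

theory Defs
  imports Main
begin

text \<open>Annotations of annotable fragments are stored directly in the syntax tree:
 an annotated (CLC) code base has annotations of type \<open>'f form\<close>, a plain LC
 program has annotations of type \<open>unit\<close> (i.e. no annotations).\<close>

type_synonym sname = string
type_synonym fname = string
type_synonym mname = string
type_synonym vname = string

datatype ty = TInt | TVoidPtr | TStructPtr sname

datatype uop = UMinus | UNot
datatype bop = BAdd | BSub | BMul | BDiv | BAnd | BOr | BLt | BLe | BGt | BGe | BEq | BNeq

datatype 'a expr =
    Num int
  | Null
  | Par vname
  | Call fname "('a \<times> 'a expr) list"
  | Mem "'a expr" mname
  | Assign "'a expr" mname "'a expr"
  | Cond "'a expr" "'a expr" "'a expr"
  | Seq "('a \<times> 'a expr) list"
  | Uop uop "'a expr"
  | Bop bop "'a expr" "'a expr"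
  | Malloc sname
  | Mfree "'a expr"

text \<open>struct s { T1 m1; ...; Tk mk; } with an annotation for each member declaration\<close>
datatype 'a sdef = SDef sname "('a \<times> ty \<times> mname) list"

text \<open>T0 f(T1 x1, ..., Tk xk) { return e; } with an annotation for each parameter\<close>
datatype 'a fdef = FDef ty fname "('a \<times> ty \<times> vname) list" "'a expr"

datatype 'a prog = Prog "('a \<times> 'a sdef) list" "('a \<times> 'a fdef) list"

fun sname_of :: "'a sdef \<Rightarrow> sname" where "sname_of (SDef s _) = s"
fun fname_of :: "'a fdef \<Rightarrow> fname" where "fname_of (FDef _ f _ _) = f"

fun sdefs :: "'a prog \<Rightarrow> ('a \<times> 'a sdef) list" where "sdefs (Prog sds fds) = sds"
fun fdefs :: "'a prog \<Rightarrow> ('a \<times> 'a fdef) list" where "fdefs (Prog sds fds) = fds"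

definition lookup_struct :: "'a prog \<Rightarrow> sname \<Rightarrow> ('a \<times> 'a sdef) option" where
  "lookup_struct P s = map_of (map (\<lambda>(a, sd). (sname_of sd, (a, sd))) (sdefs P)) s"

definition lookup_fun :: "'a prog \<Rightarrow> fname \<Rightarrow> ('a \<times> 'a fdef) option" where
  "lookup_fun P f = map_of (map (\<lambda>(a, fd). (fname_of fd, (a, fd))) (fdefs P)) f"

definition struct_names :: "'a prog \<Rightarrow> sname set" where
  "struct_names P = sname_of ` snd ` set (sdefs P)"

fun member_decl :: "'a sdef \<Rightarrow> mname \<Rightarrow> ('a \<times> ty) option" where
  "member_decl (SDef s ms) m = map_of (map (\<lambda>(a, T, m'). (m', (a, T))) ms) m"

definition lookup_member :: "'a prog \<Rightarrow> sname \<Rightarrow> mname \<Rightarrow> ('a \<times> ty) option" where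
  "lookup_member P s m =
     (case lookup_struct P s of None \<Rightarrow> None | Some (_, sd) \<Rightarrow> member_decl sd m)"

definition subty :: "'a prog \<Rightarrow> ty \<Rightarrow> ty \<Rightarrow> bool" where
  "subty P T1 T2 \<longleftrightarrow> T1 = T2 \<or> (\<exists>s. T1 = TVoidPtr \<and> T2 = TStructPtr s \<and> s \<in> struct_names P)"

definition is_max :: "'a prog \<Rightarrow> ty \<Rightarrow> ty \<Rightarrow> ty \<Rightarrow> bool" where
  "is_max P T1 T2 T3 \<longleftrightarrow> (subty P T1 T2 \<and> T3 = T2) \<or> (subty P T2 T1 \<and> T3 = T1)"

fun uop_ok :: "uop \<Rightarrow> ty \<Rightarrow> bool" where
  "uop_ok UMinus T = (T = TInt)"
| "uop_ok UNot T = True"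

fun bop_ok :: "bop \<Rightarrow> ty \<Rightarrow> bool" where
  "bop_ok BEq T = True"
| "bop_ok BNeq T = True"
| "bop_ok _ T = (T = TInt)"

fun expr_snames :: "'a expr \<Rightarrow> sname set"
and args_snames :: "('a \<times> 'a expr) list \<Rightarrow> sname set" where
  "expr_snames (Num n) = {}"
| "expr_snames Null = {}"
| "expr_snames (Par x) = {}"
| "expr_snames (Call f args) = args_snames args"
| "expr_snames (Mem e m) = expr_snames e"
| "expr_snames (Assign e m e') = expr_snames e \<union> expr_snames e'"
| "expr_snames (Cond e0 e1 e2) = expr_snames e0 \<union> expr_snames e1 \<union> expr_snames e2"
| "expr_snames (Seq es) = args_snames es"
| "expr_snames (Uop u e) = expr_snames e"
| "expr_snames (Bop b e1 e2) = expr_snames e1 \<union> expr_snames e2"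
| "expr_snames (Malloc s) = {s}"
| "expr_snames (Mfree e) = expr_snames e"
| "args_snames [] = {}"
| "args_snames ((a, e) # es) = expr_snames e \<union> args_snames es"

fun expr_fnames :: "'a expr \<Rightarrow> fname set"
and args_fnames :: "('a \<times> 'a expr) list \<Rightarrow> fname set" where
  "expr_fnames (Num n) = {}"
| "expr_fnames Null = {}"
| "expr_fnames (Par x) = {}"
| "expr_fnames (Call f args) = insert f (args_fnames args)"
| "expr_fnames (Mem e m) = expr_fnames e"
| "expr_fnames (Assign e m e') = expr_fnames e \<union> expr_fnames e'"
| "expr_fnames (Cond e0 e1 e2) = expr_fnames e0 \<union> expr_fnames e1 \<union> expr_fnames e2"
| "expr_fnames (Seq es) = args_fnames es"
| "expr_fnames (Uop u e) = expr_fnames e"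
| "expr_fnames (Bop b e1 e2) = expr_fnames e1 \<union> expr_fnames e2"
| "expr_fnames (Malloc s) = {}"
| "expr_fnames (Mfree e) = expr_fnames e"
| "args_fnames [] = {}"
| "args_fnames ((a, e) # es) = expr_fnames e \<union> args_fnames es"

fun expr_wf :: "'a expr \<Rightarrow> bool"
and args_wf :: "('a \<times> 'a expr) list \<Rightarrow> bool" where
  "expr_wf (Num n) = True"
| "expr_wf Null = True"
| "expr_wf (Par x) = True"
| "expr_wf (Call f args) = args_wf args"
| "expr_wf (Mem e m) = expr_wf e"
| "expr_wf (Assign e m e') = (expr_wf e \<and> expr_wf e')"
| "expr_wf (Cond e0 e1 e2) = (expr_wf e0 \<and> expr_wf e1 \<and> expr_wf e2)"
| "expr_wf (Seq es) = (es \<noteq> [] \<and> args_wf es)"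
| "expr_wf (Uop u e) = expr_wf e"
| "expr_wf (Bop b e1 e2) = (expr_wf e1 \<and> expr_wf e2)"
| "expr_wf (Malloc s) = True"
| "expr_wf (Mfree e) = expr_wf e"
| "args_wf [] = True"
| "args_wf ((a, e) # es) = (expr_wf e \<and> args_wf es)"

fun ty_snames :: "ty \<Rightarrow> sname set" where
  "ty_snames (TStructPtr s) = {s}"
| "ty_snames _ = {}"

fun sdef_wf :: "'a sdef \<Rightarrow> bool" where
  "sdef_wf (SDef s ms) = distinct (map (\<lambda>(a, T, m). m) ms)"

fun fdef_wf :: "'a fdef \<Rightarrow> bool" where
  "fdef_wf (FDef T f xs e) = (distinct (map (\<lambda>(a, T, x). x) xs) \<and> expr_wf e)"

definition prog_wf :: "'a prog \<Rightarrow> bool" where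
  "prog_wf P \<longleftrightarrow>
     distinct (map (sname_of \<circ> snd) (sdefs P)) \<and>
     distinct (map (fname_of \<circ> snd) (fdefs P)) \<and>
     (\<forall>(a, sd) \<in> set (sdefs P). sdef_wf sd) \<and>
     (\<forall>(a, fd) \<in> set (fdefs P). fdef_wf fd)"

fun sdef_snames :: "'a sdef \<Rightarrow> sname set" where
  "sdef_snames (SDef s ms) = insert s (\<Union>(a, T, m) \<in> set ms. ty_snames T)"

fun fdef_snames :: "'a fdef \<Rightarrow> sname set" where
  "fdef_snames (FDef T f xs e) =
     ty_snames T \<union> (\<Union>(a, T', x) \<in> set xs. ty_snames T') \<union> expr_snames e"

fun fdef_fnames :: "'a fdef \<Rightarrow> fname set" where
  "fdef_fnames (FDef T f xs e) = expr_fnames e"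

definition sane :: "'a prog \<Rightarrow> bool" where
  "sane P \<longleftrightarrow>
     (\<Union>(a, sd) \<in> set (sdefs P). sdef_snames sd) \<union> (\<Union>(a, fd) \<in> set (fdefs P). fdef_snames fd)
       \<subseteq> struct_names P \<and>
     (\<Union>(a, fd) \<in> set (fdefs P). fdef_fnames fd) \<subseteq> fname_of ` snd ` set (fdefs P) \<and>
     (\<exists>a e. lookup_fun P ''main'' = Some (a, FDef TInt ''main'' [] e))"

datatype 'j dtree = DNode 'j "'j dtree list"

fun droot :: "'j dtree \<Rightarrow> 'j" where "droot (DNode j ts) = j"

inductive valid_dtree :: "('j list \<Rightarrow> 'j \<Rightarrow> bool) \<Rightarrow> 'j dtree \<Rightarrow> bool" for R where
  "R (map droot ts) j \<Longrightarrow> (\<forall>t \<in> set ts. valid_dtree R t) \<Longrightarrow> valid_dtree R (DNode j ts)"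

inductive occurs_in :: "'j \<Rightarrow> 'j dtree \<Rightarrow> bool" where
  "occurs_in j (DNode j ts)"
| "t \<in> set ts \<Longrightarrow> occurs_in j t \<Longrightarrow> occurs_in j (DNode j' ts)"

type_synonym tenv = "vname \<Rightarrow> ty option"

datatype lc_judg = LJ tenv "unit expr" ty

inductive lc_rule :: "unit prog \<Rightarrow> lc_judg list \<Rightarrow> lc_judg \<Rightarrow> bool" for P where
  T_int: "lc_rule P [] (LJ \<Gamma> (Num n) TInt)"
| T_null: "lc_rule P [] (LJ \<Gamma> Null TVoidPtr)"
| T_par: "\<Gamma> x = Some T \<Longrightarrow> lc_rule P [] (LJ \<Gamma> (Par x) T)"
| T_app: "lookup_fun P f = Some (b, FDef T0 f ps body) \<Longrightarrow>
          length args = length ps \<Longrightarrow> length Ts' = length args \<Longrightarrow>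
          (\<forall>i < length args. subty P (Ts' ! i) (fst (snd (ps ! i)))) \<Longrightarrow>
          lc_rule P (map (\<lambda>((a, e), T'). LJ \<Gamma> e T') (zip args Ts')) (LJ \<Gamma> (Call f args) T0)"
| T_member: "lookup_member P s m = Some (b, T) \<Longrightarrow>
          lc_rule P [LJ \<Gamma> e0 (TStructPtr s)] (LJ \<Gamma> (Mem e0 m) T)"
| T_assign: "lookup_member P s m = Some (b, T) \<Longrightarrow> subty P T1 T \<Longrightarrow>
          lc_rule P [LJ \<Gamma> e0 (TStructPtr s), LJ \<Gamma> e1 T1] (LJ \<Gamma> (Assign e0 m e1) T)"
| T_cond: "is_max P T1 T2 T3 \<Longrightarrow>
          lc_rule P [LJ \<Gamma> e0 T0, LJ \<Gamma> e1 T1, LJ \<Gamma> e2 T2] (LJ \<Gamma> (Cond e0 e1 e2) T3)"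
| T_seq: "es \<noteq> [] \<Longrightarrow> length Ts = length es \<Longrightarrow>
          lc_rule P (map (\<lambda>((a, e), T). LJ \<Gamma> e T) (zip es Ts)) (LJ \<Gamma> (Seq es) (last Ts))"
| T_uop: "uop_ok u T0 \<Longrightarrow> lc_rule P [LJ \<Gamma> e0 T0] (LJ \<Gamma> (Uop u e0) TInt)"
| T_bop: "is_max P T1 T2 T3 \<Longrightarrow> bop_ok b T3 \<Longrightarrow>
          lc_rule P [LJ \<Gamma> e1 T1, LJ \<Gamma> e2 T2] (LJ \<Gamma> (Bop b e1 e2) TInt)"
| T_malloc: "s \<in> struct_names P \<Longrightarrow> lc_rule P [] (LJ \<Gamma> (Malloc s) (TStructPtr s))"
| T_mfree: "lc_rule P [LJ \<Gamma> e0 (TStructPtr s)] (LJ \<Gamma> (Mfree e0) TVoidPtr)"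

fun lj_snames :: "lc_judg \<Rightarrow> sname set" where
  "lj_snames (LJ \<Gamma> e T) = (\<Union>T' \<in> ran \<Gamma>. ty_snames T') \<union> expr_snames e \<union> ty_snames T"

definition dtree_snames :: "lc_judg dtree \<Rightarrow> sname set" where
  "dtree_snames D = (\<Union>{lj_snames j | j. occurs_in j D})"

datatype 'f form = FVar 'f | FNot "'f form" | FAnd "'f form" "'f form" | FOr "'f form" "'f form"
  | FFalse | FTrue

fun sat :: "'f set \<Rightarrow> 'f form \<Rightarrow> bool" where
  "sat p (FVar f) = (f \<in> p)"
| "sat p (FNot a) = (\<not> sat p a)"
| "sat p (FAnd a b) = (sat p a \<and> sat p b)"
| "sat p (FOr a b) = (sat p a \<or> sat p b)"
| "sat p FFalse = False"
| "sat p FTrue = True"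

fun fvars :: "'f form \<Rightarrow> 'f set" where
  "fvars (FVar f) = {f}"
| "fvars (FNot a) = fvars a"
| "fvars (FAnd a b) = fvars a \<union> fvars b"
| "fvars (FOr a b) = fvars a \<union> fvars b"
| "fvars FFalse = {}"
| "fvars FTrue = {}"

definition FImp :: "'f form \<Rightarrow> 'f form \<Rightarrow> 'f form" where "FImp a b = FOr (FNot a) b"
definition FIff :: "'f form \<Rightarrow> 'f form \<Rightarrow> 'f form" where "FIff a b = FAnd (FImp a b) (FImp b a)"

definition entails :: "'f form \<Rightarrow> 'f form \<Rightarrow> bool" where
  "entails \<theta> \<theta>' \<longleftrightarrow> (\<forall>p. sat p (FImp \<theta> \<theta>'))"

definition valid_product :: "'f set \<Rightarrow> 'f form \<Rightarrow> 'f set \<Rightarrow> bool" where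
  "valid_product F \<phi> p \<longleftrightarrow> p \<subseteq> F \<and> sat p \<phi>"

fun expr_annots :: "'a expr \<Rightarrow> 'a set"
and args_annots :: "('a \<times> 'a expr) list \<Rightarrow> 'a set" where
  "expr_annots (Num n) = {}"
| "expr_annots Null = {}"
| "expr_annots (Par x) = {}"
| "expr_annots (Call f args) = args_annots args"
| "expr_annots (Mem e m) = expr_annots e"
| "expr_annots (Assign e m e') = expr_annots e \<union> expr_annots e'"
| "expr_annots (Cond e0 e1 e2) = expr_annots e0 \<union> expr_annots e1 \<union> expr_annots e2"
| "expr_annots (Seq es) = args_annots es"
| "expr_annots (Uop u e) = expr_annots e"
| "expr_annots (Bop b e1 e2) = expr_annots e1 \<union> expr_annots e2"
| "expr_annots (Malloc s) = {}"
| "expr_annots (Mfree e) = expr_annots e"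
| "args_annots [] = {}"
| "args_annots ((a, e) # es) = insert a (expr_annots e \<union> args_annots es)"

fun sdef_annots :: "'a sdef \<Rightarrow> 'a set" where
  "sdef_annots (SDef s ms) = (\<lambda>(a, T, m). a) ` set ms"

fun fdef_annots :: "'a fdef \<Rightarrow> 'a set" where
  "fdef_annots (FDef T f xs e) = (\<lambda>(a, T, x). a) ` set xs \<union> expr_annots e"

definition prog_annots :: "'a prog \<Rightarrow> 'a set" where
  "prog_annots P = (\<Union>(a, sd) \<in> set (sdefs P). insert a (sdef_annots sd))
                 \<union> (\<Union>(a, fd) \<in> set (fdefs P). insert a (fdef_annots fd))"

definition is_spl :: "'f set \<Rightarrow> 'f form \<Rightarrow> 'f form prog \<Rightarrow> bool" where
  "is_spl F \<phi> Prg \<longleftrightarrow> finite F \<and> fvars \<phi> \<subseteq> F \<and> (\<forall>a \<in> prog_annots Prg. fvars a \<subseteq> F)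
     \<and> prog_wf Prg"

text \<open>AT(Prg(s)); AT(T). (For an undefined struct name, which cannot happen in a sane
 program, we use 0.)\<close>
definition AT_struct :: "'f form prog \<Rightarrow> sname \<Rightarrow> 'f form" where
  "AT_struct P s = (case lookup_struct P s of Some (a, _) \<Rightarrow> a | None \<Rightarrow> FFalse)"

fun AT_ty :: "'f form prog \<Rightarrow> ty \<Rightarrow> 'f form" where
  "AT_ty P TInt = FTrue"
| "AT_ty P TVoidPtr = FTrue"
| "AT_ty P (TStructPtr s) = AT_struct P s"

definition exists_ann :: "('f form \<times> 'f form expr) list \<Rightarrow> 'f form" where
  "exists_ann es = foldr (\<lambda>(a, e) acc. FOr a acc) es FFalse"

text \<open>neverLast(k, (e1..en)) = !AT(ek) || AT(e_{k+1}) || ... || AT(en)  (k 0-based here)\<close>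
definition neverLast :: "nat \<Rightarrow> ('f form \<times> 'f form expr) list \<Rightarrow> 'f form" where
  "neverLast k es = FOr (FNot (fst (es ! k))) (exists_ann (drop (Suc k) es))"

type_synonym 'f aenv = "vname \<Rightarrow> (ty \<times> 'f form) option"

datatype 'f ft_judg =
    JPrg "'f form"
  | JStruct "'f form" "'f form sdef"
  | JFun "'f form" "'f form fdef"
  | JExp "'f form" "'f aenv" "'f form expr" ty

inductive ft_rule :: "'f form prog \<Rightarrow> 'f ft_judg list \<Rightarrow> 'f ft_judg \<Rightarrow> bool" for Prg where
  FT_prg: "sane Prg \<Longrightarrow> (\<exists>fd. lookup_fun Prg ''main'' = Some (FTrue, fd)) \<Longrightarrow>
     ft_rule Prg (map (\<lambda>(a, sd). JStruct (FAnd \<phi> a) sd) (sdefs Prg)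
                @ map (\<lambda>(a, fd). JFun (FAnd \<phi> a) fd) (fdefs Prg)) (JPrg \<phi>)"
| FT_struct: "(\<forall>(a, T, m) \<in> set ms. entails \<theta> (FImp a (AT_ty Prg T))) \<Longrightarrow>
     ft_rule Prg [] (JStruct \<theta> (SDef s ms))"
| FT_fun: "entails \<theta> (AT_ty Prg T0) \<Longrightarrow>
     (\<forall>(a, T, x) \<in> set xs. entails \<theta> (FImp a (AT_ty Prg T))) \<Longrightarrow>
     \<Delta> = map_of (map (\<lambda>(a, T, x). (x, (T, a))) xs) \<Longrightarrow>
     subty Prg T' T0 \<Longrightarrow>
     ft_rule Prg [JExp \<theta> \<Delta> e T'] (JFun \<theta> (FDef T0 f xs e))"
| FT_int: "ft_rule Prg [] (JExp \<theta> \<Delta> (Num n) TInt)"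
| FT_null: "ft_rule Prg [] (JExp \<theta> \<Delta> Null TVoidPtr)"
| FT_par: "\<Delta> x = Some (T, \<psi>) \<Longrightarrow> entails \<theta> \<psi> \<Longrightarrow> ft_rule Prg [] (JExp \<theta> \<Delta> (Par x) T)"
| FT_app: "lookup_fun Prg f = Some (af, FDef T0 f ps body) \<Longrightarrow> entails \<theta> af \<Longrightarrow>
     length args = length ps \<Longrightarrow> length Ts' = length args \<Longrightarrow>
     (\<forall>i < length args. subty Prg (Ts' ! i) (fst (snd (ps ! i)))
         \<and> entails \<theta> (FIff (fst (args ! i)) (fst (ps ! i)))) \<Longrightarrow>
     ft_rule Prg (map (\<lambda>((a, e), T'). JExp \<theta> \<Delta> e T') (zip args Ts')) (JExp \<theta> \<Delta> (Call f args) T0)"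
| FT_member: "lookup_member Prg s m = Some (am, T) \<Longrightarrow> entails \<theta> am \<Longrightarrow>
     ft_rule Prg [JExp \<theta> \<Delta> e0 (TStructPtr s)] (JExp \<theta> \<Delta> (Mem e0 m) T)"
| FT_assign: "lookup_member Prg s m = Some (am, T) \<Longrightarrow> entails \<theta> am \<Longrightarrow> subty Prg T1 T \<Longrightarrow>
     ft_rule Prg [JExp \<theta> \<Delta> e0 (TStructPtr s), JExp \<theta> \<Delta> e1 T1] (JExp \<theta> \<Delta> (Assign e0 m e1) T)"
| FT_cond: "is_max Prg T1 T2 T3 \<Longrightarrow>
     ft_rule Prg [JExp \<theta> \<Delta> e0 T0, JExp \<theta> \<Delta> e1 T1, JExp \<theta> \<Delta> e2 T2] (JExp \<theta> \<Delta> (Cond e0 e1 e2) T3)"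
| FT_seq: "entails \<theta> (exists_ann es) \<Longrightarrow> length Ts = length es \<Longrightarrow> es \<noteq> [] \<Longrightarrow>
     (\<forall>i < length es. Ts ! i \<noteq> last Ts \<longrightarrow> entails \<theta> (neverLast i es)) \<Longrightarrow>
     ft_rule Prg (map (\<lambda>((a, e), T). JExp (FAnd \<theta> a) \<Delta> e T) (zip es Ts)) (JExp \<theta> \<Delta> (Seq es) (last Ts))"
| FT_uop: "uop_ok u T0 \<Longrightarrow> ft_rule Prg [JExp \<theta> \<Delta> e0 T0] (JExp \<theta> \<Delta> (Uop u e0) TInt)"
| FT_bop: "is_max Prg T1 T2 T3 \<Longrightarrow> bop_ok b T3 \<Longrightarrow>
     ft_rule Prg [JExp \<theta> \<Delta> e1 T1, JExp \<theta> \<Delta> e2 T2] (JExp \<theta> \<Delta> (Bop b e1 e2) TInt)"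
| FT_malloc: "s \<in> struct_names Prg \<Longrightarrow> entails \<theta> (AT_struct Prg s) \<Longrightarrow>
     ft_rule Prg [] (JExp \<theta> \<Delta> (Malloc s) (TStructPtr s))"
| FT_mfree: "ft_rule Prg [JExp \<theta> \<Delta> e0 (TStructPtr s)] (JExp \<theta> \<Delta> (Mfree e0) TVoidPtr)"

fun vexp :: "'f set \<Rightarrow> 'f form expr \<Rightarrow> unit expr"
and vargs :: "'f set \<Rightarrow> ('f form \<times> 'f form expr) list \<Rightarrow> (unit \<times> unit expr) list" where
  "vexp p (Num n) = Num n"
| "vexp p Null = Null"
| "vexp p (Par x) = Par x"
| "vexp p (Call f args) = Call f (vargs p args)"
| "vexp p (Mem e m) = Mem (vexp p e) m"
| "vexp p (Assign e m e') = Assign (vexp p e) m (vexp p e')"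
| "vexp p (Cond e0 e1 e2) = Cond (vexp p e0) (vexp p e1) (vexp p e2)"
| "vexp p (Seq es) = Seq (vargs p es)"
| "vexp p (Uop u e) = Uop u (vexp p e)"
| "vexp p (Bop b e1 e2) = Bop b (vexp p e1) (vexp p e2)"
| "vexp p (Malloc s) = Malloc s"
| "vexp p (Mfree e) = Mfree (vexp p e)"
| "vargs p [] = []"
| "vargs p ((a, e) # es) = (if sat p a then ((), vexp p e) # vargs p es else vargs p es)"

fun vsdef :: "'f set \<Rightarrow> 'f form sdef \<Rightarrow> unit sdef" where
  "vsdef p (SDef s ms) = SDef s (map (\<lambda>(a, T, m). ((), T, m)) (filter (\<lambda>(a, T, m). sat p a) ms))"

fun vfdef :: "'f set \<Rightarrow> 'f form fdef \<Rightarrow> unit fdef" where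
  "vfdef p (FDef T f xs e) =
     FDef T f (map (\<lambda>(a, T, x). ((), T, x)) (filter (\<lambda>(a, T, x). sat p a) xs)) (vexp p e)"

fun vprog :: "'f set \<Rightarrow> 'f form prog \<Rightarrow> unit prog" where
  "vprog p (Prog sds fds) =
     Prog (map (\<lambda>(a, sd). ((), vsdef p sd)) (filter (\<lambda>(a, sd). sat p a) sds))
          (map (\<lambda>(a, fd). ((), vfdef p fd)) (filter (\<lambda>(a, fd). sat p a) fds))"

definition venv :: "'f set \<Rightarrow> 'f aenv \<Rightarrow> tenv" where
  "venv p \<Delta> = (\<lambda>x. case \<Delta> x of None \<Rightarrow> None | Some (T, \<psi>) \<Rightarrow> if sat p \<psi> then Some T else None)"

end

theory Submission
  imports Defs
begin

text \<open>The LC derivation is built by induction on the family-based derivation of the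
expression judgment: an instance of an FT rule whose context \<open>\<theta>\<close> holds in \<open>p\<close> becomes
an instance of the corresponding LC rule of the variant. All annotations entailed by \<open>\<theta>\<close>
hold in \<open>p\<close>, so the functions, members and structs that are looked up survive variant
generation; the side condition \<open>AT(e\<^sub>i) \<Leftrightarrow> AT(T\<^sub>i x\<^sub>i)\<close> of FT-app makes the kept arguments
line up with the kept parameters, and \<open>neverLast\<close> makes the last kept element of a
sequence carry the type of the sequence. Every type that occurs is guarded by the
annotation of a member, a parameter, a result type or a MALLOC, and the checks of
FT-struct and FT-fun at the top of the derivation turn these guards into presence of the
struct, which gives the second claim.\<close>

definition derivable :: "('j list \<Rightarrow> 'j \<Rightarrow> bool) \<Rightarrow> 'j \<Rightarrow> bool" where
  "derivable R j \<longleftrightarrow> (\<exists>D. valid_dtree R D \<and> droot D = j)"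

lemma valid_dtree_DNode:
  "valid_dtree R (DNode j ts) \<longleftrightarrow> R (map droot ts) j \<and> (\<forall>t\<in>set ts. valid_dtree R t)"
  by (auto elim: valid_dtree.cases intro: valid_dtree.intros)

lemma occurs_in_DNode: "occurs_in j' (DNode j ts) \<longleftrightarrow> j' = j \<or> (\<exists>t\<in>set ts. occurs_in j' t)"
  by (auto elim: occurs_in.cases intro: occurs_in.intros)

lemma derivable_iff: "derivable R j \<longleftrightarrow> (\<exists>js. R js j \<and> (\<forall>j'\<in>set js. derivable R j'))"
proof
  assume "derivable R j"
  then obtain ts where "valid_dtree R (DNode j ts)"
    unfolding derivable_def by (metis droot.simps dtree.exhaust)
  then show "\<exists>js. R js j \<and> (\<forall>j'\<in>set js. derivable R j')"
    unfolding valid_dtree_DNode derivable_def by (intro exI[of _ "map droot ts"]) auto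
next
  assume "\<exists>js. R js j \<and> (\<forall>j'\<in>set js. derivable R j')"
  then obtain js where js: "R js j" "\<forall>j'\<in>set js. \<exists>D. valid_dtree R D \<and> droot D = j'"
    unfolding derivable_def by blast
  then obtain f where f: "\<forall>j'\<in>set js. valid_dtree R (f j') \<and> droot (f j') = j'"
    by metis
  then have "js = map droot (map f js)"
    by (simp add: map_idI)
  then show "derivable R j"
    unfolding derivable_def using js(1) f
    by (intro exI[of _ "DNode j (map f js)"]) (auto simp: valid_dtree_DNode)
qed

lemma derivable_rule: "R js j \<Longrightarrow> \<forall>j'\<in>set js. derivable R j' \<Longrightarrow> derivable R j"
  using derivable_iff by metis

lemma occurs_in_invariant:
  assumes "occurs_in j D" and "valid_dtree R D" and "Q (droot D)"
    and step: "\<And>js j'. R js j' \<Longrightarrow> Q j' \<Longrightarrow> \<forall>j''\<in>set js. Q j''"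
  shows "Q j"
  using assms(1-3) by induction (auto simp: valid_dtree_DNode dest!: step)

lemma occurs_in_derivable: "occurs_in j D \<Longrightarrow> valid_dtree R D \<Longrightarrow> derivable R j"
  by (induction rule: occurs_in.induct) (auto simp: valid_dtree_DNode derivable_def intro: exI[of _ "DNode _ _"])

lemma valid_dtree_restrict:
  "valid_dtree (\<lambda>js j. R js j \<and> Q j) D \<Longrightarrow> valid_dtree R D \<and> (\<forall>j. occurs_in j D \<longrightarrow> Q j)"
  by (induction rule: valid_dtree.induct) (auto simp: valid_dtree_DNode occurs_in_DNode)

lemma sat_FImp [simp]: "sat p (FImp a b) \<longleftrightarrow> (sat p a \<longrightarrow> sat p b)"
  by (simp add: FImp_def)

lemma sat_FIff [simp]: "sat p (FIff a b) \<longleftrightarrow> (sat p a \<longleftrightarrow> sat p b)"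
  by (auto simp: FIff_def)

lemma entails_sat: "entails \<theta> \<psi> \<Longrightarrow> sat p \<theta> \<Longrightarrow> sat p \<psi>"
  by (simp add: entails_def)

lemma sat_exists_ann: "sat p (exists_ann es) \<longleftrightarrow> (\<exists>(a, e)\<in>set es. sat p a)"
  unfolding exists_ann_def by (induction es) auto

lemma sat_neverLast:
  "sat p (neverLast k es) \<longleftrightarrow> (sat p (fst (es ! k)) \<longrightarrow> (\<exists>(a, e)\<in>set (drop (Suc k) es). sat p a))"
  by (simp add: neverLast_def sat_exists_ann)

lemma map_of_map_filter:
  assumes "map_of (map (\<lambda>x. (key x, g x)) xs) k = Some v" and "P v"
  shows "map_of (map (\<lambda>x. (key x, f (g x))) (filter (\<lambda>x. P (g x)) xs)) k = Some (f v)"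
  using assms by (induction xs) auto

lemma lookup_struct_in_sdefs: "lookup_struct P s = Some x \<Longrightarrow> x \<in> set (sdefs P)"
  by (auto simp: lookup_struct_def dest!: map_of_SomeD)

lemma lookup_fun_in_fdefs: "lookup_fun P f = Some x \<Longrightarrow> x \<in> set (fdefs P)"
  by (auto simp: lookup_fun_def dest!: map_of_SomeD)

lemma lookup_struct_vprog:
  assumes "lookup_struct P s = Some (a, sd)" and "sat p a"
  shows "lookup_struct (vprog p P) s = Some ((), vsdef p sd)"
proof -
  have "sname_of (vsdef p sd) = sname_of sd" for sd
    by (cases sd) simp
  with assms show ?thesis
    using map_of_map_filter[where key = "sname_of \<circ> snd" and g = "\<lambda>x. x" and P = "sat p \<circ> fst"
        and f = "\<lambda>(a, sd). ((), vsdef p sd)"]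
    unfolding lookup_struct_def by (cases P) (simp add: case_prod_unfold comp_def)
qed

lemma lookup_fun_vprog:
  assumes "lookup_fun P f = Some (a, fd)" and "sat p a"
  shows "lookup_fun (vprog p P) f = Some ((), vfdef p fd)"
proof -
  have "fname_of (vfdef p fd) = fname_of fd" for fd
    by (cases fd) simp
  with assms show ?thesis
    using map_of_map_filter[where key = "fname_of \<circ> snd" and g = "\<lambda>x. x" and P = "sat p \<circ> fst"
        and f = "\<lambda>(a, fd). ((), vfdef p fd)"]
    unfolding lookup_fun_def by (cases P) (simp add: case_prod_unfold comp_def)
qed

lemma member_decl_vsdef:
  assumes "member_decl sd m = Some (am, T)" and "sat p am"
  shows "member_decl (vsdef p sd) m = Some ((), T)"
  using assms map_of_map_filter[where key = "snd \<circ> snd" and g = "\<lambda>(a, T, m). (a, T)"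
      and P = "sat p \<circ> fst" and f = "\<lambda>(a, T). ((), T)" and k = m and v = "(am, T)"]
  by (cases sd) (simp add: case_prod_unfold comp_def)

lemma sat_AT_struct_iff:
  "sat p (AT_struct P s) \<longleftrightarrow> (\<exists>a sd. lookup_struct P s = Some (a, sd) \<and> sat p a)"
  by (auto simp: AT_struct_def split: option.splits)

lemma lookup_member_vprog:
  assumes "lookup_member P s m = Some (am, T)" and "sat p (AT_struct P s)" and "sat p am"
  shows "lookup_member (vprog p P) s m = Some ((), T)"
  using assms lookup_struct_vprog member_decl_vsdef
  by (fastforce simp: lookup_member_def sat_AT_struct_iff split: option.splits)

lemma struct_names_conv_lookup: "s \<in> struct_names P \<longleftrightarrow> lookup_struct P s \<noteq> None"
  unfolding struct_names_def lookup_struct_def by (force simp: map_of_eq_None_iff)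

lemma struct_names_if_sat_AT_struct: "sat p (AT_struct P s) \<Longrightarrow> s \<in> struct_names P"
  by (auto simp: struct_names_conv_lookup sat_AT_struct_iff)

lemma struct_names_vprog: "sat p (AT_struct P s) \<Longrightarrow> s \<in> struct_names (vprog p P)"
  by (auto simp: struct_names_conv_lookup sat_AT_struct_iff dest: lookup_struct_vprog)

lemma subty_vprog: "subty P T1 T2 \<Longrightarrow> sat p (AT_ty P T2) \<Longrightarrow> subty (vprog p P) T1 T2"
  unfolding subty_def using struct_names_vprog by fastforce

lemma is_max_vprog:
  "is_max P T1 T2 T3 \<Longrightarrow> sat p (AT_ty P T1) \<Longrightarrow> sat p (AT_ty P T2) \<Longrightarrow> is_max (vprog p P) T1 T2 T3"
  unfolding is_max_def using subty_vprog by blast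

definition vtys :: "'f set \<Rightarrow> ('f form \<times> 'f form expr) list \<Rightarrow> ty list \<Rightarrow> ty list" where
  "vtys p args Ts = map snd (filter (\<lambda>((a, e), T). sat p a) (zip args Ts))"

lemma vargs_conv_filter: "vargs p args = map (\<lambda>(a, e). ((), vexp p e)) (filter (\<lambda>(a, e). sat p a) args)"
  by (induction args) auto

lemma zip_vargs_vtys:
  "length Ts = length args \<Longrightarrow> zip (vargs p args) (vtys p args Ts)
     = map (\<lambda>((a, e), T). (((), vexp p e), T)) (filter (\<lambda>((a, e), T). sat p a) (zip args Ts))"
  by (induction args Ts rule: list_induct2') (auto simp: vtys_def)

lemma length_vargs_vtys: "length Ts = length args \<Longrightarrow> length (vargs p args) = length (vtys p args Ts)"
  by (induction args Ts rule: list_induct2') (auto simp: vtys_def)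

lemma list_all2_filter:
  "list_all2 R xs ys \<Longrightarrow> (\<And>x y. R x y \<Longrightarrow> P x \<longleftrightarrow> Q y) \<Longrightarrow>
   list_all2 (\<lambda>x y. R x y \<and> P x) (filter P xs) (filter Q ys)"
  by (induction rule: list_all2_induct) auto

lemma last_filter_nth:
  assumes "k < length xs" and "P (xs ! k)" and "\<forall>j. k < j \<and> j < length xs \<longrightarrow> \<not> P (xs ! j)"
  shows "filter P xs \<noteq> [] \<and> last (filter P xs) = xs ! k"
proof -
  have "filter P (drop (Suc k) xs) = []"
    using assms(3) by (auto simp: filter_empty_conv in_set_conv_nth)
  then have "filter P xs = filter P (take k xs) @ [xs ! k]"
    using assms(2) by (subst id_take_nth_drop[OF assms(1)]) simp
  then show ?thesis by simp
qed

lemma vtys_last: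
  assumes len: "length Ts = length es" and ex: "sat p (exists_ann es)"
    and never_last: "\<forall>i<length es. Ts ! i \<noteq> last Ts \<longrightarrow> sat p (neverLast i es)"
  shows "vtys p es Ts \<noteq> [] \<and> last (vtys p es Ts) = last Ts"
proof -
  define K where "K = {i. i < length es \<and> sat p (fst (es ! i))}"
  define k where "k = Max K"
  have "finite K"
    by (simp add: K_def)
  moreover have "K \<noteq> {}"
  proof -
    obtain a e where "(a, e) \<in> set es" "sat p a"
      using ex by (auto simp: sat_exists_ann)
    then show ?thesis
      unfolding K_def in_set_conv_nth by force
  qed
  ultimately
  have k: "k < length es" "sat p (fst (es ! k))"
    and later: "\<forall>j. k < j \<and> j < length es \<longrightarrow> \<not> sat p (fst (es ! j))"
    using Max_in Max_ge unfolding k_def K_def by (auto simp: not_le[symmetric])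
  have "Ts ! k = last Ts"
  proof (rule ccontr)
    assume "Ts ! k \<noteq> last Ts"
    then have "sat p (neverLast k es)"
      using never_last k by blast
    then obtain i a e where "i < length es - Suc k" "es ! Suc (k + i) = (a, e)" "sat p a"
      using k by (auto simp: sat_neverLast in_set_conv_nth)
    then show False
      using later[rule_format, of "Suc (k + i)"] by (simp add: less_diff_conv)
  qed
  moreover have "filter (\<lambda>((a, e), T). sat p a) (zip es Ts) \<noteq> []
      \<and> last (filter (\<lambda>((a, e), T). sat p a) (zip es Ts)) = zip es Ts ! k"
    by (rule last_filter_nth) (use k later len in \<open>auto simp: case_prod_unfold\<close>)
  ultimately show ?thesis
    using k len by (simp add: vtys_def last_map)
qed

lemma vtys_params:
  assumes "list_all2 (\<lambda>((a, e), T) (b, U, x). (sat p a \<longleftrightarrow> sat p b) \<and> (sat p a \<longrightarrow> R T U)) (zip args Ts) ps"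
  shows "list_all2 R (vtys p args Ts) (map (\<lambda>(b, U, x). U) (filter (\<lambda>(b, U, x). sat p b) ps))"
proof -
  have "list_all2 (\<lambda>((a, e), T) (b, U, x). sat p a \<and> R T U)
      (filter (\<lambda>((a, e), T). sat p a) (zip args Ts)) (filter (\<lambda>(b, U, x). sat p b) ps)"
    using list_all2_filter[OF assms] by (rule list_all2_mono) auto
  then show ?thesis
    unfolding vtys_def list_all2_map1 list_all2_map2
    by (rule list_all2_mono) auto
qed

section \<open>Presence of struct names\<close>

definition lj_present :: "'f set \<Rightarrow> 'f form prog \<Rightarrow> lc_judg \<Rightarrow> bool" where
  "lj_present p P j \<longleftrightarrow> (\<forall>s\<in>lj_snames j. sat p (AT_struct P s))"

definition aenv_present :: "'f set \<Rightarrow> 'f form prog \<Rightarrow> 'f aenv \<Rightarrow> bool" where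
  "aenv_present p P \<Delta> \<longleftrightarrow> (\<forall>x T \<psi>. \<Delta> x = Some (T, \<psi>) \<longrightarrow> sat p \<psi> \<longrightarrow> sat p (AT_ty P T))"

definition lc_rule_present :: "'f set \<Rightarrow> 'f form prog \<Rightarrow> lc_judg list \<Rightarrow> lc_judg \<Rightarrow> bool" where
  "lc_rule_present p P js j \<longleftrightarrow> lc_rule (vprog p P) js j \<and> lj_present p P j"

lemma sat_AT_ty_iff: "sat p (AT_ty P T) \<longleftrightarrow> (\<forall>s\<in>ty_snames T. sat p (AT_struct P s))"
  by (cases T) auto

lemma lj_present_venv:
  assumes "aenv_present p P \<Delta>"
  shows "lj_present p P (LJ (venv p \<Delta>) e T)
    \<longleftrightarrow> (\<forall>s\<in>expr_snames e. sat p (AT_struct P s)) \<and> sat p (AT_ty P T)"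
proof -
  have "sat p (AT_ty P T')" if "T' \<in> ran (venv p \<Delta>)" for T'
  proof -
    from that obtain x \<psi> where "\<Delta> x = Some (T', \<psi>)" "sat p \<psi>"
      by (auto simp: ran_def venv_def split: option.splits if_splits)
    with assms show ?thesis
      by (auto simp: aenv_present_def)
  qed
  then show ?thesis
    by (auto simp: lj_present_def sat_AT_ty_iff)
qed

lemma derivable_present_rule:
  "lc_rule (vprog p P) js j \<Longrightarrow> lj_present p P j \<Longrightarrow> \<forall>j'\<in>set js. derivable (lc_rule_present p P) j' \<Longrightarrow>
   derivable (lc_rule_present p P) j"
  by (rule derivable_rule) (auto simp: lc_rule_present_def)

lemma derivable_present_venv:
  assumes "derivable (lc_rule_present p P) (LJ (venv p \<Delta>) e T)" and "aenv_present p P \<Delta>"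
  shows "(\<forall>s\<in>expr_snames e. sat p (AT_struct P s)) \<and> sat p (AT_ty P T)"
proof -
  obtain js where "lc_rule_present p P js (LJ (venv p \<Delta>) e T)"
    using assms(1) derivable_iff by metis
  then show ?thesis
    using assms(2) by (simp add: lc_rule_present_def lj_present_venv)
qed

lemma args_snames_conv: "args_snames xs = (\<Union>(a, e)\<in>set xs. expr_snames e)"
  by (induction xs) auto

lemma vargs_premises:
  assumes len: "length Ts = length args" and \<Delta>: "aenv_present p P \<Delta>"
    and prem: "\<forall>((a, e), T)\<in>set (zip args Ts). sat p a \<longrightarrow>
      derivable (lc_rule_present p P) (LJ (venv p \<Delta>) (vexp p e) T)"
  shows "\<forall>j\<in>set (map (\<lambda>((a, e), T). LJ (venv p \<Delta>) e T) (zip (vargs p args) (vtys p args Ts))).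
      derivable (lc_rule_present p P) j"
    and "\<forall>s\<in>args_snames (vargs p args). sat p (AT_struct P s)"
    and "\<forall>T\<in>set (vtys p args Ts). sat p (AT_ty P T)"
proof -
  show "\<forall>j\<in>set (map (\<lambda>((a, e), T). LJ (venv p \<Delta>) e T) (zip (vargs p args) (vtys p args Ts))).
      derivable (lc_rule_present p P) j"
    using prem by (auto simp: zip_vargs_vtys[OF len])
  show "\<forall>T\<in>set (vtys p args Ts). sat p (AT_ty P T)"
    using prem derivable_present_venv[OF _ \<Delta>] by (fastforce simp: vtys_def)
  have "\<forall>s\<in>expr_snames (vexp p e). sat p (AT_struct P s)"
    if mem: "(a, e) \<in> set args" and kept: "sat p a" for a e
  proof -
    obtain T where "((a, e), T) \<in> set (zip args Ts)"
      by (rule in_set_impl_in_set_zip1[OF len[symmetric] mem])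
    then show ?thesis
      using prem kept derivable_present_venv[OF _ \<Delta>] by blast
  qed
  then show "\<forall>s\<in>args_snames (vargs p args). sat p (AT_struct P s)"
    by (auto simp: args_snames_conv vargs_conv_filter)
qed

section \<open>From family-based to variant derivations\<close>

lemma seq_variant:
  assumes "entails \<theta> (exists_ann es)" and len: "length Ts = length es"
    and "\<forall>i<length es. Ts ! i \<noteq> last Ts \<longrightarrow> entails \<theta> (neverLast i es)"
    and "sat p \<theta>" and \<Delta>: "aenv_present p P \<Delta>"
    and elems: "\<forall>((a, e), T)\<in>set (zip es Ts). sat p a \<longrightarrow>
      derivable (lc_rule_present p P) (LJ (venv p \<Delta>) (vexp p e) T)"
  shows "derivable (lc_rule_present p P) (LJ (venv p \<Delta>) (Seq (vargs p es)) (last Ts))"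
proof -
  have last: "vtys p es Ts \<noteq> [] \<and> last (vtys p es Ts) = last Ts"
    using assms(1,3,4) entails_sat by (intro vtys_last[OF len]) blast+
  moreover have "length (vargs p es) = length (vtys p es Ts)"
    using len by (rule length_vargs_vtys)
  ultimately have "lc_rule (vprog p P) (map (\<lambda>((a, e), T). LJ (venv p \<Delta>) e T) (zip (vargs p es) (vtys p es Ts)))
      (LJ (venv p \<Delta>) (Seq (vargs p es)) (last Ts))"
    using lc_rule.T_seq[of "vargs p es" "vtys p es Ts"] by (metis length_0_conv)
  moreover note kept = vargs_premises[OF len \<Delta> elems]
  moreover have "sat p (AT_ty P (last Ts))"
    using kept(3) last by (metis last_in_set)
  ultimately show ?thesis
    by (intro derivable_present_rule) (auto simp: lj_present_venv[OF \<Delta>])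
qed

context
  fixes Prg :: "'f form prog" and p :: "'f set"
  assumes member_type_present: "\<And>a s ms am T m. (a, SDef s ms) \<in> set (sdefs Prg) \<Longrightarrow> sat p a \<Longrightarrow>
      (am, T, m) \<in> set ms \<Longrightarrow> sat p am \<Longrightarrow> sat p (AT_ty Prg T)"
    and result_type_present: "\<And>af T0 f xs body. (af, FDef T0 f xs body) \<in> set (fdefs Prg) \<Longrightarrow> sat p af \<Longrightarrow>
      sat p (AT_ty Prg T0)"
    and param_type_present: "\<And>af T0 f xs body a T x. (af, FDef T0 f xs body) \<in> set (fdefs Prg) \<Longrightarrow>
      sat p af \<Longrightarrow> (a, T, x) \<in> set xs \<Longrightarrow> sat p a \<Longrightarrow> sat p (AT_ty Prg T)"
begin

lemma lookup_member_variant: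
  assumes "lookup_member Prg s m = Some (am, T)" and "sat p (AT_struct Prg s)" and "sat p am"
  shows "lookup_member (vprog p Prg) s m = Some ((), T)" and "sat p (AT_ty Prg T)"
proof -
  show "lookup_member (vprog p Prg) s m = Some ((), T)"
    using assms by (rule lookup_member_vprog)
  obtain a sd where "lookup_struct Prg s = Some (a, sd)" "sat p a" "member_decl sd m = Some (am, T)"
    using assms(1,2) by (auto simp: lookup_member_def sat_AT_struct_iff split: option.splits)
  then show "sat p (AT_ty Prg T)"
    using member_type_present assms(3)
    by (cases sd) (auto dest!: lookup_struct_in_sdefs map_of_SomeD)
qed

lemma call_args_subty_params:
  assumes f: "(af, FDef T0 f ps body) \<in> set (fdefs Prg)" and "sat p af"
    and len: "length args = length ps" "length Ts' = length args"
    and match: "\<forall>i<length args. subty Prg (Ts' ! i) (fst (snd (ps ! i)))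
      \<and> entails \<theta> (FIff (fst (args ! i)) (fst (ps ! i)))"
    and \<theta>: "sat p \<theta>"
  shows "list_all2 (subty (vprog p Prg)) (vtys p args Ts')
    (map (\<lambda>(b, U, x). U) (filter (\<lambda>(b, U, x). sat p b) ps))"
proof (rule vtys_params, rule list_all2_all_nthI)
  show "length (zip args Ts') = length ps"
    using len by simp
  fix i assume "i < length (zip args Ts')"
  then have i: "i < length args" "i < length ps"
    using len by auto
  obtain a e where arg: "args ! i = (a, e)"
    by (cases "args ! i") auto
  obtain b U x where par: "ps ! i = (b, U, x)"
    by (cases "ps ! i") auto
  have "entails \<theta> (FIff a b)"
    using match i arg par by (metis fst_conv)
  then have iff: "sat p a \<longleftrightarrow> sat p b"
    using entails_sat[OF _ \<theta>] by fastforce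
  have "subty (vprog p Prg) (Ts' ! i) U" if "sat p a"
  proof (rule subty_vprog)
    show "subty Prg (Ts' ! i) U"
      using match i par by (metis fst_conv snd_conv)
    show "sat p (AT_ty Prg U)"
      using param_type_present[OF f \<open>sat p af\<close>, of b U x] nth_mem[OF i(2)] par iff that by simp
  qed
  then show "(\<lambda>((a, e), T') (b, U, x). (sat p a \<longleftrightarrow> sat p b) \<and> (sat p a \<longrightarrow> subty (vprog p Prg) T' U))
      (zip args Ts' ! i) (ps ! i)"
    using i len arg par iff by simp
qed

lemma call_variant:
  assumes lookup: "lookup_fun Prg f = Some (af, FDef T0 f ps body)" and "entails \<theta> af"
    and len: "length args = length ps" "length Ts' = length args"
    and match: "\<forall>i<length args. subty Prg (Ts' ! i) (fst (snd (ps ! i)))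
      \<and> entails \<theta> (FIff (fst (args ! i)) (fst (ps ! i)))"
    and \<theta>: "sat p \<theta>" and \<Delta>: "aenv_present p Prg \<Delta>"
    and args: "\<forall>((a, e), T)\<in>set (zip args Ts'). sat p a \<longrightarrow>
      derivable (lc_rule_present p Prg) (LJ (venv p \<Delta>) (vexp p e) T)"
  shows "derivable (lc_rule_present p Prg) (LJ (venv p \<Delta>) (Call f (vargs p args)) T0)"
proof -
  have af: "sat p af"
    using \<open>entails \<theta> af\<close> \<theta> by (rule entails_sat)
  have f: "(af, FDef T0 f ps body) \<in> set (fdefs Prg)"
    using lookup by (rule lookup_fun_in_fdefs)
  let ?ps = "map (\<lambda>(a, T, x). ((), T, x)) (filter (\<lambda>(a, T, x). sat p a) ps)"
  have "lookup_fun (vprog p Prg) f = Some ((), FDef T0 f ?ps (vexp p body))"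
    using lookup_fun_vprog[OF lookup af] by simp
  moreover have "list_all2 (subty (vprog p Prg)) (vtys p args Ts')
      (map (\<lambda>(b, U, x). U) (filter (\<lambda>(b, U, x). sat p b) ps))"
    using f af len match \<theta> by (rule call_args_subty_params)
  ultimately have "lc_rule (vprog p Prg)
      (map (\<lambda>((a, e), T). LJ (venv p \<Delta>) e T) (zip (vargs p args) (vtys p args Ts')))
      (LJ (venv p \<Delta>) (Call f (vargs p args)) T0)"
    using length_vargs_vtys[OF len(2)]
    by (intro lc_rule.T_app) (auto simp: list_all2_conv_all_nth case_prod_unfold)
  moreover note kept = vargs_premises[OF len(2) \<Delta> args]
  ultimately show ?thesis
    using result_type_present[OF f af]
    by (intro derivable_present_rule) (auto simp: lj_present_venv[OF \<Delta>])
qed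

lemma ft_rule_variant:
  assumes rule: "ft_rule Prg js (JExp \<theta> \<Delta> e T)" and \<theta>: "sat p \<theta>" and \<Delta>: "aenv_present p Prg \<Delta>"
    and prems: "\<And>\<theta>' e' T'. JExp \<theta>' \<Delta> e' T' \<in> set js \<Longrightarrow> sat p \<theta>' \<Longrightarrow>
      derivable (lc_rule_present p Prg) (LJ (venv p \<Delta>) (vexp p e') T')"
  shows "derivable (lc_rule_present p Prg) (LJ (venv p \<Delta>) (vexp p e) T)"
proof -
  have child: "derivable (lc_rule_present p Prg) (LJ (venv p \<Delta>) (vexp p e') T')
      \<and> (\<forall>s\<in>expr_snames (vexp p e'). sat p (AT_struct Prg s)) \<and> sat p (AT_ty Prg T')"
    if "JExp \<theta> \<Delta> e' T' \<in> set js" for e' T'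
    using prems[OF that \<theta>] derivable_present_venv \<Delta> by blast
  from rule show ?thesis
  proof cases
    case (FT_par x \<psi>)
    then have "sat p \<psi>" and "venv p \<Delta> x = Some T"
      using \<theta> entails_sat by (auto simp: venv_def)
    with FT_par show ?thesis
      using \<Delta> by (intro derivable_present_rule) (auto simp: lj_present_venv aenv_present_def intro: lc_rule.T_par)
  next
    case (FT_member s m am e0)
    then have "lookup_member (vprog p Prg) s m = Some ((), T)" and "sat p (AT_ty Prg T)"
      using lookup_member_variant child[of e0 "TStructPtr s"] entails_sat[OF _ \<theta>] by auto
    then show ?thesis
      unfolding \<open>e = Mem e0 m\<close> vexp.simps
      using FT_member child[of e0 "TStructPtr s"] \<Delta>
      by (intro derivable_present_rule[OF lc_rule.T_member]) (auto simp: lj_present_venv)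
  next
    case (FT_assign s m am T1 e0 e1)
    then have "lookup_member (vprog p Prg) s m = Some ((), T)" and "sat p (AT_ty Prg T)"
      using lookup_member_variant child[of e0 "TStructPtr s"] entails_sat[OF _ \<theta>] by auto
    then show ?thesis
      unfolding \<open>e = Assign e0 m e1\<close> vexp.simps
      using FT_assign child[of e0 "TStructPtr s"] child[of e1 T1] \<Delta>
      by (intro derivable_present_rule[OF lc_rule.T_assign]) (auto simp: lj_present_venv subty_vprog)
  next
    case (FT_app f af ps body args Ts')
    moreover have "\<forall>((a, e'), T')\<in>set (zip args Ts'). sat p a \<longrightarrow>
        derivable (lc_rule_present p Prg) (LJ (venv p \<Delta>) (vexp p e') T')"
      using child FT_app by force
    ultimately show ?thesis
      using call_variant \<theta> \<Delta> by simp
  next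
    case (FT_seq es Ts)
    moreover have "\<forall>((a, e'), T')\<in>set (zip es Ts). sat p a \<longrightarrow>
        derivable (lc_rule_present p Prg) (LJ (venv p \<Delta>) (vexp p e') T')"
      using FT_seq \<theta> by (force intro: prems)
    ultimately show ?thesis
      using seq_variant \<theta> \<Delta> by simp
  next
    case (FT_cond T1 T2 e0 T0 e1 e2)
    then show ?thesis
      using child[of e0 T0] child[of e1 T1] child[of e2 T2] \<Delta>
      by (intro derivable_present_rule) (auto simp: lj_present_venv is_max_def intro!: lc_rule.T_cond is_max_vprog)
  next
    case (FT_uop u T0 e0)
    then show ?thesis
      using child[of e0 T0] \<Delta> by (intro derivable_present_rule) (auto simp: lj_present_venv intro!: lc_rule.T_uop)
  next
    case (FT_bop T1 T2 T3 b e1 e2)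
    then show ?thesis
      using child[of e1 T1] child[of e2 T2] \<Delta>
      by (intro derivable_present_rule) (auto simp: lj_present_venv intro!: lc_rule.T_bop is_max_vprog)
  next
    case (FT_malloc s)
    then have "sat p (AT_struct Prg s)"
      using \<theta> by (blast intro: entails_sat)
    with FT_malloc show ?thesis
      using \<Delta> by (intro derivable_present_rule) (auto simp: lj_present_venv intro!: lc_rule.T_malloc struct_names_vprog)
  next
    case (FT_mfree e0 s)
    then show ?thesis
      using child[of e0 "TStructPtr s"] \<Delta>
      by (intro derivable_present_rule) (auto simp: lj_present_venv intro!: lc_rule.T_mfree)
  qed (use \<Delta> in \<open>intro derivable_present_rule, auto simp: lj_present_venv intro: lc_rule.intros\<close>)+
qed

lemma ft_exp_variant:
  assumes "valid_dtree (ft_rule Prg) D" and "droot D = JExp \<theta> \<Delta> e T" and "sat p \<theta>"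
    and "aenv_present p Prg \<Delta>"
  shows "derivable (lc_rule_present p Prg) (LJ (venv p \<Delta>) (vexp p e) T)"
  using assms(1-3)
proof (induction D arbitrary: \<theta> e T rule: valid_dtree.induct)
  case (1 ts j)
  show ?case
  proof (rule ft_rule_variant)
    show "ft_rule Prg (map droot ts) (JExp \<theta> \<Delta> e T)"
      using 1 by simp
    show "sat p \<theta>" and "aenv_present p Prg \<Delta>"
      by fact+
    fix \<theta>' e' T' assume "JExp \<theta>' \<Delta> e' T' \<in> set (map droot ts)" and "sat p \<theta>'"
    then obtain t where "t \<in> set ts" and "droot t = JExp \<theta>' \<Delta> e' T'"
      by auto
    then show "derivable (lc_rule_present p Prg) (LJ (venv p \<Delta>) (vexp p e') T')"
      using 1 \<open>sat p \<theta>'\<close> by blast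
  qed
qed

end

lemma ft_prg_premises:
  assumes "derivable (ft_rule Prg) (JPrg \<phi>)"
  shows "(a, sd) \<in> set (sdefs Prg) \<Longrightarrow> derivable (ft_rule Prg) (JStruct (FAnd \<phi> a) sd)"
    and "(a, fd) \<in> set (fdefs Prg) \<Longrightarrow> derivable (ft_rule Prg) (JFun (FAnd \<phi> a) fd)"
proof -
  obtain js where "ft_rule Prg js (JPrg \<phi>)" and js: "\<forall>j\<in>set js. derivable (ft_rule Prg) j"
    using assms derivable_iff by metis
  then have "js = map (\<lambda>(a, sd). JStruct (FAnd \<phi> a) sd) (sdefs Prg) @ map (\<lambda>(a, fd). JFun (FAnd \<phi> a) fd) (fdefs Prg)"
    by cases simp
  then show "(a, sd) \<in> set (sdefs Prg) \<Longrightarrow> derivable (ft_rule Prg) (JStruct (FAnd \<phi> a) sd)"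
    and "(a, fd) \<in> set (fdefs Prg) \<Longrightarrow> derivable (ft_rule Prg) (JFun (FAnd \<phi> a) fd)"
    using js by force+
qed

context
  fixes Prg :: "'f form prog" and \<phi> :: "'f form" and p :: "'f set"
  assumes prg: "derivable (ft_rule Prg) (JPrg \<phi>)" and \<phi>: "sat p \<phi>"
begin

lemma ft_prg_member_type_present:
  assumes "(a, SDef s ms) \<in> set (sdefs Prg)" and "sat p a" and "(am, T, m) \<in> set ms" and "sat p am"
  shows "sat p (AT_ty Prg T)"
proof -
  obtain js where "ft_rule Prg js (JStruct (FAnd \<phi> a) (SDef s ms))"
    using ft_prg_premises(1)[OF prg assms(1)] derivable_iff by metis
  then have "entails (FAnd \<phi> a) (FImp am (AT_ty Prg T))"
    using assms(3) by cases auto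
  then show ?thesis
    using \<phi> assms(2,4) entails_sat by fastforce
qed

lemma ft_prg_fun_types_present:
  assumes "(af, FDef T0 f xs body) \<in> set (fdefs Prg)" and "sat p af"
  shows "sat p (AT_ty Prg T0)" and "(a, T, x) \<in> set xs \<Longrightarrow> sat p a \<Longrightarrow> sat p (AT_ty Prg T)"
proof -
  obtain js where "ft_rule Prg js (JFun (FAnd \<phi> af) (FDef T0 f xs body))"
    using ft_prg_premises(2)[OF prg assms(1)] derivable_iff by metis
  then have "entails (FAnd \<phi> af) (AT_ty Prg T0)"
    and "\<forall>(a, T, x)\<in>set xs. entails (FAnd \<phi> af) (FImp a (AT_ty Prg T))"
    by (cases; simp)+
  then show "sat p (AT_ty Prg T0)" and "(a, T, x) \<in> set xs \<Longrightarrow> sat p a \<Longrightarrow> sat p (AT_ty Prg T)"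
    using \<phi> assms(2) entails_sat by fastforce+
qed

end

lemma ft_rule_exp_premise:
  "ft_rule Prg js (JExp \<theta> \<Delta> e T) \<Longrightarrow> j \<in> set js \<Longrightarrow> \<exists>\<theta>' e' T'. j = JExp \<theta>' \<Delta> e' T' \<and> entails \<theta>' \<theta>"
  by (cases rule: ft_rule.cases) (auto simp: entails_def case_prod_unfold)

lemma ft_prg_exp_judgment:
  assumes "valid_dtree (ft_rule Prg) D" and "droot D = JPrg \<phi>" and "occurs_in (JExp \<theta> \<Delta> e T) D"
  obtains af T0 f xs body where "(af, FDef T0 f xs body) \<in> set (fdefs Prg)"
    and "\<Delta> = map_of (map (\<lambda>(a, T, x). (x, (T, a))) xs)" and "entails \<theta> (FAnd \<phi> af)"
proof -
  define Q where "Q j \<longleftrightarrow> (case j of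
      JPrg \<phi>' \<Rightarrow> \<phi>' = \<phi>
    | JStruct \<theta> sd \<Rightarrow> True
    | JFun \<theta> fd \<Rightarrow> (\<exists>af. (af, fd) \<in> set (fdefs Prg) \<and> \<theta> = FAnd \<phi> af)
    | JExp \<theta> \<Delta> e T \<Rightarrow> (\<exists>af T0 f xs body. (af, FDef T0 f xs body) \<in> set (fdefs Prg)
        \<and> \<Delta> = map_of (map (\<lambda>(a, T, x). (x, (T, a))) xs) \<and> entails \<theta> (FAnd \<phi> af)))" for j
  have "Q (JExp \<theta> \<Delta> e T)"
  proof (rule occurs_in_invariant[OF assms(3,1)])
    show "Q (droot D)"
      using assms(2) by (simp add: Q_def)
    fix js j assume rule: "ft_rule Prg js j" and "Q j"
    show "\<forall>j'\<in>set js. Q j'"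
    proof (cases j)
      case (JExp \<theta>0 \<Delta>0 e0 T0)
      then show ?thesis
        using \<open>Q j\<close> ft_rule_exp_premise[of Prg js \<theta>0 \<Delta>0 e0 T0] rule
        by (fastforce simp: Q_def entails_def)
    qed (use rule \<open>Q j\<close> in \<open>cases rule: ft_rule.cases; force simp: Q_def entails_def\<close>)+
  qed
  then show ?thesis
    using that by (auto simp: Q_def)
qed

theorem theorem3:
  fixes F :: "'f set" and \<phi> :: "'f form" and Prg :: "'f form prog" and p :: "'f set"
    and D :: "'f ft_judg dtree"
    and \<theta> :: "'f form" and \<Delta> :: "'f aenv" and e :: "'f form expr" and T :: ty
  assumes spl: "is_spl F \<phi> Prg"
    and prod: "valid_product F \<phi> p"
    and deriv: "valid_dtree (ft_rule Prg) D" and root: "droot D = JPrg \<phi>"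
    and occ: "occurs_in (JExp \<theta> \<Delta> e T) D"
    and sat: "sat p \<theta>"
  shows "\<exists>D'. valid_dtree (lc_rule (vprog p Prg)) D'
            \<and> droot D' = LJ (venv p \<Delta>) (vexp p e) T
            \<and> (\<forall>s \<in> dtree_snames D'. s \<in> struct_names Prg \<and> sat p (AT_struct Prg s))"
proof -
  have prg: "derivable (ft_rule Prg) (JPrg \<phi>)"
    unfolding derivable_def using deriv root by blast
  have \<phi>: "sat p \<phi>"
    using prod by (simp add: valid_product_def)
  obtain af T0 f xs body where f: "(af, FDef T0 f xs body) \<in> set (fdefs Prg)"
    and \<Delta>: "\<Delta> = map_of (map (\<lambda>(a, T, x). (x, (T, a))) xs)" and "entails \<theta> (FAnd \<phi> af)"
    using ft_prg_exp_judgment[OF deriv root occ] by blast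
  then have "sat p af"
    using sat entails_sat by fastforce
  then have "aenv_present p Prg \<Delta>"
    unfolding aenv_present_def \<Delta> using ft_prg_fun_types_present(2)[OF prg \<phi> f]
    by (auto dest!: map_of_SomeD)
  moreover obtain t where "valid_dtree (ft_rule Prg) t" and "droot t = JExp \<theta> \<Delta> e T"
    using occurs_in_derivable[OF occ deriv] unfolding derivable_def by blast
  ultimately have "derivable (lc_rule_present p Prg) (LJ (venv p \<Delta>) (vexp p e) T)"
    using sat by (intro ft_exp_variant[of Prg p])
      (auto intro: ft_prg_member_type_present[OF prg \<phi>] ft_prg_fun_types_present[OF prg \<phi>])
  then obtain D' where "valid_dtree (\<lambda>js j. lc_rule (vprog p Prg) js j \<and> lj_present p Prg j) D'"
    and "droot D' = LJ (venv p \<Delta>) (vexp p e) T"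
    unfolding derivable_def lc_rule_present_def[abs_def] by blast
  moreover note valid_dtree_restrict[OF this(1)]
  ultimately show ?thesis
    using struct_names_if_sat_AT_struct unfolding dtree_snames_def lj_present_def by blast
qed

end
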